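(* Let $d\in\mathbb{N}$, $K=\mathbb{N}_0^d$ or $K=\mathbb{Z}^d$, $(\Omega,\mathcal F,P)$ a probability space with a $d$-parameter semigroup (group if $K=\mathbb{Z}^d$) $(\theta_k)_{k\in K}$ of $P$-preserving transformations. Let $M$ be a compact separable metric space with Borel $\sigma$-algebra $\mathcal B$, $\tau:M\to M$ continuous, and $\mu$ a $\tau$-invariant probability measure on $(M,\mathcal B)$ such that $\mu(U)>0$ for every non-empty open $U\subseteq M$. Let $\kappa:M\to K$ be measurable, $\kappa_n=\sum_{i=0}^{n-1}\kappa\circ\tau^i$, $S(t,\omega)=(\tau(t),\theta_{\kappa(t)}\omega)$, $\bar P=\mu\otimes P$, and $\mathcal J$ the $\sigma$-algebra of $S$-invariant sets in $\mathcal B\otimes\mathcal F$. Let $F$ be a $\mathcal B\otimes\mathcal F$-measurable, $\bar P$-integrable function on $M\times\Omega$ with $F(t,\cdot)\in L^1(P)$ for all $t\in M$, such that for every $\omega\in\Omega$ the sequence of functions $$t\mapsto\frac1n\sum_{i=0}^{n-1}F\big(\tau^i(t),\theta_{\kappa_i(t)}\omega\big),\qquad n\in\mathbb{N},$$ is equicontinuous on $M$. Then for $P$-almost all $\omega\in\Omega$, $$\sup_{t\in M}\Big|\frac1n\sum_{i=0}^{n-1}F\big(\tau^i(t),\theta_{\kappa_i(t)}\omega\big)-\bar E[F\mid\mathcal J](t,\omega)\Big|\to0\quad(n\to\infty).$$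
   Context: A semigroup of measure-preserving transformations: each $\theta_k$ measurable and $P$-preserving, $\theta_0=\mathrm{Id}$, $\theta_k\circ\theta_l=\theta_{k+l}$ (and $\theta_{-k}=\theta_k^{-1}$ in the group case). $\bar E[\cdot\mid\mathcal J]$ is conditional expectation w.r.t. $\bar P$. *)

theory Defs
  imports "HOL-Analysis.Analysis" "HOL-Probability.Probability"
begin

definition measure_preserving_map :: "'a measure \<Rightarrow> ('a \<Rightarrow> 'a) \<Rightarrow> bool" where
  "measure_preserving_map P T \<longleftrightarrow> T \<in> P \<rightarrow>\<^sub>M P \<and> distr P P T = P"

definition invariant_sigma :: "'a measure \<Rightarrow> ('a \<Rightarrow> 'a) \<Rightarrow> 'a measure" where
  "invariant_sigma M S = sigma (space M) {A \<in> sets M. S -` A \<inter> space M = A}"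

definition orthant :: "(int ^ 'd) set" where
  "orthant = {k. \<forall>i. 0 \<le> k $ i}"

definition kappa_sum :: "('m \<Rightarrow> int ^ 'd) \<Rightarrow> ('m \<Rightarrow> 'm) \<Rightarrow> nat \<Rightarrow> 'm \<Rightarrow> int ^ 'd" where
  "kappa_sum \<kappa> \<tau> n t = (\<Sum>i<n. \<kappa> ((\<tau> ^^ i) t))"

definition erg_avg :: "('m \<times> 'a \<Rightarrow> real) \<Rightarrow> ('m \<Rightarrow> 'm) \<Rightarrow> (int ^ 'd \<Rightarrow> 'a \<Rightarrow> 'a)
    \<Rightarrow> ('m \<Rightarrow> int ^ 'd) \<Rightarrow> nat \<Rightarrow> 'm \<Rightarrow> 'a \<Rightarrow> real" where
  "erg_avg F \<tau> \<theta> \<kappa> n t \<omega> =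
     (1 / real n) * (\<Sum>i<n. F ((\<tau> ^^ i) t, \<theta> (kappa_sum \<kappa> \<tau> i t) \<omega>))"

end

theory Submission
  imports Defs
begin

text \<open>The skew product \<open>S (t, \<omega>) = (\<tau> t, \<theta> (\<kappa> t) \<omega>)\<close> preserves \<open>\<mu> \<Otimes>\<^sub>M P\<close>, and the
  averages in the statement are exactly the Birkhoff averages of \<open>F\<close> along \<open>S\<close>. Birkhoff's
  ergodic theorem, via Garsia's maximal ergodic lemma, therefore gives convergence
  to \<open>E[F | J]\<close> almost everywhere on \<open>M \<times> \<Omega>\<close>. By Fubini, for almost every \<open>\<omega>\<close> the averages
  converge for \<open>\<mu>\<close>-almost every \<open>t\<close>, hence on a dense set, because \<open>\<mu>\<close> charges every nonempty
  open set; equicontinuity on the compact space \<open>M\<close> upgrades this to uniform convergence.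
  Taking the limit function to be the pointwise limit of the averages makes it exactly
  \<open>S\<close>-invariant, hence measurable for the invariant \<open>\<sigma>\<close>-algebra.\<close>

lemma measurable_funpow:
  assumes "T \<in> M \<rightarrow>\<^sub>M M"
  shows "T ^^ n \<in> M \<rightarrow>\<^sub>M M"
proof (induction n)
  case (Suc n)
  then show ?case using measurable_comp[OF Suc assms] by (simp add: comp_def)
qed simp

lemma measure_preserving_map_funpow:
  assumes "measure_preserving_map M T"
  shows "measure_preserving_map M (T ^^ n)"
proof -
  have T: "T \<in> M \<rightarrow>\<^sub>M M" "distr M M T = M"
    using assms unfolding measure_preserving_map_def by auto
  have "distr M M (T ^^ n) = M"
  proof (induction n)
    case (Suc n)
    have "distr M M (T ^^ Suc n) = distr (distr M M T) M (T ^^ n)"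
      unfolding funpow_Suc_right
      by (rule distr_distr[symmetric]) (auto intro: measurable_funpow T)
    also have "\<dots> = M" using Suc T by simp
    finally show ?case .
  qed simp
  then show ?thesis
    unfolding measure_preserving_map_def using measurable_funpow[OF T(1)] by simp
qed

lemma
  fixes f :: "_ \<Rightarrow> real"
  assumes "measure_preserving_map M T"
  shows integrable_funpow: "integrable M f \<Longrightarrow> integrable M (\<lambda>x. f ((T ^^ n) x))"
    and integral_funpow: "f \<in> borel_measurable M \<Longrightarrow> (\<integral>x. f ((T ^^ n) x) \<partial>M) = (\<integral>x. f x \<partial>M)"
proof -
  have Tn: "T ^^ n \<in> M \<rightarrow>\<^sub>M M" "distr M M (T ^^ n) = M"
    using measure_preserving_map_funpow[OF assms] unfolding measure_preserving_map_def by auto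
  show "integrable M (\<lambda>x. f ((T ^^ n) x))" if "integrable M f"
    using integrable_distr_eq[OF Tn(1), of f] Tn(2) that by auto
  show "(\<integral>x. f ((T ^^ n) x) \<partial>M) = (\<integral>x. f x \<partial>M)" if "f \<in> borel_measurable M"
    using integral_distr[OF Tn(1) that] Tn(2) by simp
qed

section \<open>Birkhoff sums and the maximal ergodic lemma\<close>

definition birkhoff_sum :: "('x \<Rightarrow> 'x) \<Rightarrow> ('x \<Rightarrow> real) \<Rightarrow> nat \<Rightarrow> 'x \<Rightarrow> real" where
  "birkhoff_sum T f n x = (\<Sum>i<n. f ((T ^^ i) x))"

lemma birkhoff_sum_0 [simp]: "birkhoff_sum T f 0 x = 0"
  by (simp add: birkhoff_sum_def)

lemma birkhoff_sum_Suc: "birkhoff_sum T f (Suc n) x = f x + birkhoff_sum T f n (T x)"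
  unfolding birkhoff_sum_def sum.lessThan_Suc_shift by (simp add: funpow_Suc_right del: funpow.simps)

lemma borel_measurable_birkhoff_sum [measurable]:
  assumes "T \<in> M \<rightarrow>\<^sub>M M" "f \<in> borel_measurable M"
  shows "birkhoff_sum T f n \<in> borel_measurable M"
  unfolding birkhoff_sum_def
  by (intro borel_measurable_sum measurable_compose[OF measurable_funpow[OF assms(1)] assms(2)])

lemma integrable_birkhoff_sum:
  assumes "measure_preserving_map M T" "integrable M f"
  shows "integrable M (birkhoff_sum T f n)"
  unfolding birkhoff_sum_def[abs_def] using integrable_funpow[OF assms] by auto

primrec max_birkhoff_sum :: "('x \<Rightarrow> 'x) \<Rightarrow> ('x \<Rightarrow> real) \<Rightarrow> nat \<Rightarrow> 'x \<Rightarrow> real" where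
  "max_birkhoff_sum T f 0 x = 0"
| "max_birkhoff_sum T f (Suc n) x = max (max_birkhoff_sum T f n x) (birkhoff_sum T f (Suc n) x)"

lemma birkhoff_sum_le_max_birkhoff_sum:
  "k \<le> n \<Longrightarrow> birkhoff_sum T f k x \<le> max_birkhoff_sum T f n x"
  by (induction n) (auto simp: le_Suc_eq)

lemma max_birkhoff_sum_nonneg: "0 \<le> max_birkhoff_sum T f n x"
  using birkhoff_sum_le_max_birkhoff_sum[of 0 n T f x] by (simp only: birkhoff_sum_0)

lemma max_birkhoff_sum_attained: "\<exists>k\<le>n. max_birkhoff_sum T f n x = birkhoff_sum T f k x"
proof (induction n)
  case (Suc n)
  then obtain k where k: "k \<le> n" "max_birkhoff_sum T f n x = birkhoff_sum T f k x" by auto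
  show ?case
  proof (cases "max_birkhoff_sum T f n x \<le> birkhoff_sum T f (Suc n) x")
    case True then show ?thesis by (intro exI[of _ "Suc n"]) simp
  next
    case False then show ?thesis using k by (intro exI[of _ k]) simp
  qed
qed simp

lemma integrable_max_birkhoff_sum:
  assumes "measure_preserving_map M T" "integrable M f"
  shows "integrable M (max_birkhoff_sum T f n)"
  by (induction n) (simp_all add: integrable_max integrable_birkhoff_sum[OF assms])

lemma max_birkhoff_sum_le_step:
  assumes "0 < max_birkhoff_sum T f n x"
  shows "max_birkhoff_sum T f n x \<le> f x + max_birkhoff_sum T f n (T x)"
proof -
  obtain k where k: "k \<le> n" "max_birkhoff_sum T f n x = birkhoff_sum T f k x"
    using max_birkhoff_sum_attained[of n T f x] by blast
  with assms obtain j where j: "k = Suc j" by (cases k) auto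
  have "birkhoff_sum T f j (T x) \<le> max_birkhoff_sum T f n (T x)"
    using k(1) j by (intro birkhoff_sum_le_max_birkhoff_sum) simp
  then show ?thesis
    using k(2) unfolding j birkhoff_sum_Suc by linarith
qed

text \<open>Garsia's proof: on the set where the maximal sum is positive, \<open>f\<close> dominates the
  decrement of the maximal sum along \<open>T\<close>, and this decrement integrates to zero.\<close>
lemma maximal_ergodic_lemma:
  fixes f :: "_ \<Rightarrow> real"
  assumes T: "measure_preserving_map M T" and f: "integrable M f"
  shows "0 \<le> (\<integral>x. indicator {x\<in>space M. 0 < max_birkhoff_sum T f n x} x * f x \<partial>M)"
proof -
  let ?m = "max_birkhoff_sum T f n" and ?A = "{x\<in>space M. 0 < max_birkhoff_sum T f n x}"
  have m: "integrable M ?m" by (rule integrable_max_birkhoff_sum[OF T f])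
  have mT: "integrable M (\<lambda>x. ?m (T x))"
    using integrable_funpow[OF T m, of 1] by simp
  have A: "?A \<in> sets M"
    using borel_measurable_integrable[OF m] unfolding borel_measurable_iff_greater by blast
  have decrement: "?m x - ?m (T x) \<le> indicator ?A x * f x" if "x \<in> space M" for x
    using that max_birkhoff_sum_le_step[of T f n x]
      max_birkhoff_sum_nonneg[of T f n x] max_birkhoff_sum_nonneg[of T f n "T x"]
    by (cases "0 < ?m x") simp_all
  have "0 = (\<integral>x. ?m x \<partial>M) - (\<integral>x. ?m (T x) \<partial>M)"
    using integral_funpow[OF T borel_measurable_integrable[OF m], of 1] by simp
  also have "\<dots> = (\<integral>x. ?m x - ?m (T x) \<partial>M)"
    using m mT by simp
  also have "\<dots> \<le> (\<integral>x. indicator ?A x * f x \<partial>M)"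
    using integrable_mult_indicator[OF A f] Bochner_Integration.integrable_diff[OF m mT] decrement
    by (intro integral_mono) auto
  finally show ?thesis .
qed

lemma integral_nonneg_if_birkhoff_sum_pos:
  fixes f :: "_ \<Rightarrow> real"
  assumes T: "measure_preserving_map M T" and f: "integrable M f"
    and pos: "\<And>x. x \<in> space M \<Longrightarrow> f x \<noteq> 0 \<Longrightarrow> \<exists>n. 0 < birkhoff_sum T f n x"
  shows "0 \<le> (\<integral>x. f x \<partial>M)"
proof -
  let ?A = "\<lambda>n. {x\<in>space M. 0 < max_birkhoff_sum T f n x}"
  have [measurable]: "max_birkhoff_sum T f n \<in> borel_measurable M" for n
    using integrable_max_birkhoff_sum[OF T f] by auto
  have [measurable]: "f \<in> borel_measurable M" using f by auto
  have "(\<lambda>n. \<integral>x. indicator (?A n) x * f x \<partial>M) \<longlonglongrightarrow> (\<integral>x. f x \<partial>M)"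
  proof (rule integral_dominated_convergence[where w="\<lambda>x. norm (f x)"])
    show "(\<lambda>x. indicator (?A n) x * f x) \<in> borel_measurable M" for n by measurable
    show "AE x in M. (\<lambda>n. indicator (?A n) x * f x) \<longlonglongrightarrow> f x"
    proof (rule AE_I2)
      fix x assume x: "x \<in> space M"
      show "(\<lambda>n. indicator (?A n) x * f x) \<longlonglongrightarrow> f x"
      proof (cases "f x = 0")
        case False
        then obtain k where k: "0 < birkhoff_sum T f k x" using pos x by blast
        have "indicator (?A n) x * f x = f x" if "k \<le> n" for n
          using x k birkhoff_sum_le_max_birkhoff_sum[OF that, of T f x] by simp
        then show ?thesis
          by (intro tendsto_eventually) (auto simp: eventually_sequentially)
      qed simp
    qed
  qed (use f in \<open>auto simp: indicator_def\<close>)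
  then show ?thesis
    by (rule LIMSEQ_le_const) (use maximal_ergodic_lemma[OF T f] in blast)
qed

section \<open>The invariant \<open>\<sigma>\<close>-algebra\<close>

lemma
  assumes T: "T \<in> M \<rightarrow>\<^sub>M M"
  shows sets_invariant_sigma: "sets (invariant_sigma M T) = {A \<in> sets M. T -` A \<inter> space M = A}"
    and space_invariant_sigma: "space (invariant_sigma M T) = space M"
proof -
  let ?G = "{A \<in> sets M. T -` A \<inter> space M = A}"
  have sub: "?G \<subseteq> Pow (space M)" using sets.sets_into_space by auto
  have "sigma_algebra (space M) ?G"
    unfolding sigma_algebra_iff2
  proof (intro conjI ballI allI impI)
    fix A :: "nat \<Rightarrow> _" assume "range A \<subseteq> ?G"
    moreover have "T -` (\<Union>i. A i) \<inter> space M = (\<Union>i. T -` A i \<inter> space M)" by auto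
    ultimately show "(\<Union>i. A i) \<in> ?G" by auto
  qed (use sub measurable_space[OF T] in auto)
  then have "sigma_sets (space M) ?G = ?G" by (rule sigma_algebra.sigma_sets_eq)
  then show "sets (invariant_sigma M T) = ?G"
    unfolding invariant_sigma_def using sets_measure_of[OF sub] by simp
  show "space (invariant_sigma M T) = space M"
    unfolding invariant_sigma_def using space_measure_of[OF sub] by simp
qed

lemma subalgebra_invariant_sigma: "T \<in> M \<rightarrow>\<^sub>M M \<Longrightarrow> subalgebra M (invariant_sigma M T)"
  unfolding subalgebra_def by (auto simp: sets_invariant_sigma space_invariant_sigma)

lemma invariant_sigma_measurable_funpow:
  fixes h :: "_ \<Rightarrow> 'b::t1_space"
  assumes T: "T \<in> M \<rightarrow>\<^sub>M M" and h: "h \<in> borel_measurable (invariant_sigma M T)"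
    and x: "x \<in> space M"
  shows "h ((T ^^ i) x) = h x"
proof (induction i)
  case (Suc i)
  let ?y = "(T ^^ i) x"
  have "h -` {h ?y} \<inter> space (invariant_sigma M T) \<in> sets (invariant_sigma M T)"
    by (rule measurable_sets[OF h]) simp
  then have "T -` (h -` {h ?y} \<inter> space M) \<inter> space M = h -` {h ?y} \<inter> space M"
    by (simp add: sets_invariant_sigma[OF T] space_invariant_sigma[OF T])
  moreover have "?y \<in> space M" using measurable_space[OF measurable_funpow[OF T] x] .
  ultimately have "h (T ?y) = h ?y" by blast
  with Suc show ?case by simp
qed simp

lemma measurable_invariant_sigmaI:
  assumes T: "T \<in> M \<rightarrow>\<^sub>M M" and g: "g \<in> M \<rightarrow>\<^sub>M N"
    and inv: "\<And>x. x \<in> space M \<Longrightarrow> g (T x) = g x"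
  shows "g \<in> invariant_sigma M T \<rightarrow>\<^sub>M N"
proof (rule measurableI)
  fix A assume A: "A \<in> sets N"
  have "T -` (g -` A \<inter> space M) \<inter> space M = g -` A \<inter> space M"
    using inv measurable_space[OF T] by auto
  then show "g -` A \<inter> space (invariant_sigma M T) \<in> sets (invariant_sigma M T)"
    using measurable_sets[OF g A] by (simp add: sets_invariant_sigma[OF T] space_invariant_sigma[OF T])
qed (use measurable_space[OF g] in \<open>auto simp: space_invariant_sigma[OF T]\<close>)

section \<open>Birkhoff's ergodic theorem\<close>

lemma bounded_above_nat_iff: "(\<exists>m::nat. \<forall>n. g n \<le> real m) \<longleftrightarrow> (\<exists>C. \<forall>n. g n \<le> C)"
  by (metis order_trans real_nat_ceiling_ge)

lemma birkhoff_sum_bounded_above_shift: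
  "(\<exists>C. \<forall>n. birkhoff_sum T f n (T x) \<le> C) \<longleftrightarrow> (\<exists>C. \<forall>n. birkhoff_sum T f n x \<le> C)"
proof
  assume "\<exists>C. \<forall>n. birkhoff_sum T f n (T x) \<le> C"
  then obtain C where C: "\<And>n. birkhoff_sum T f n (T x) \<le> C" by blast
  have "birkhoff_sum T f n x \<le> max 0 (f x + C)" for n
    using C by (cases n) (auto simp: birkhoff_sum_Suc intro: max.coboundedI2)
  then show "\<exists>C. \<forall>n. birkhoff_sum T f n x \<le> C" by blast
next
  assume "\<exists>C. \<forall>n. birkhoff_sum T f n x \<le> C"
  then obtain C where "\<And>n. birkhoff_sum T f n x \<le> C" by blast
  then have "birkhoff_sum T f n (T x) \<le> C - f x" for n
    using birkhoff_sum_Suc[of T f n x] by (metis add.commute le_diff_eq)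
  then show "\<exists>C. \<forall>n. birkhoff_sum T f n (T x) \<le> C" by blast
qed

lemma
  assumes T: "T \<in> M \<rightarrow>\<^sub>M M"
    and D: "D = {x\<in>space M. \<not> (\<exists>C. \<forall>n. birkhoff_sum T h n x \<le> C)}"
  shows birkhoff_sum_unbounded_invariant: "T -` D \<inter> space M = D"
    and sets_birkhoff_sum_unbounded: "h \<in> borel_measurable M \<Longrightarrow> D \<in> sets M"
proof -
  have "T -` D \<inter> space M = {x\<in>space M. \<not> (\<exists>C. \<forall>n. birkhoff_sum T h n (T x) \<le> C)}"
    using measurable_space[OF T] unfolding D by auto
  then show "T -` D \<inter> space M = D"
    unfolding birkhoff_sum_bounded_above_shift D .
  show "D \<in> sets M" if [measurable]: "h \<in> borel_measurable M"
    unfolding D bounded_above_nat_iff[symmetric] using T by measurable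
qed

text \<open>On the invariant set \<open>D\<close> where the Birkhoff sums of \<open>h\<close> are unbounded above, some sum
  is positive, so the maximal ergodic lemma applies to \<open>h\<close> restricted to \<open>D\<close>.\<close>
lemma integral_nonneg_on_birkhoff_sum_unbounded:
  fixes h :: "_ \<Rightarrow> real"
  assumes T: "measure_preserving_map M T" and h: "integrable M h"
    and D: "D = {x\<in>space M. \<not> (\<exists>C. \<forall>n. birkhoff_sum T h n x \<le> C)}"
  shows "0 \<le> (\<integral>x. indicator D x * h x \<partial>M)"
proof (rule integral_nonneg_if_birkhoff_sum_pos[OF T])
  have Tm: "T \<in> M \<rightarrow>\<^sub>M M" using T unfolding measure_preserving_map_def by blast
  have D_sets: "D \<in> sets M" using sets_birkhoff_sum_unbounded[OF Tm D] h by auto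
  show "integrable M (\<lambda>x. indicator D x * h x)"
    using integrable_mult_indicator[OF D_sets h] by simp
  have "\<exists>n. 0 < birkhoff_sum T (\<lambda>x. indicator D x * h x) n x" if x: "x \<in> D" for x
  proof -
    have "(T ^^ i) x \<in> D" for i
      by (induction i) (use x birkhoff_sum_unbounded_invariant[OF Tm D] in auto)
    then have "birkhoff_sum T (\<lambda>x. indicator D x * h x) n x = birkhoff_sum T h n x" for n
      unfolding birkhoff_sum_def by simp
    moreover have "\<not> (\<forall>n. birkhoff_sum T h n x \<le> 0)"
      using x unfolding D by blast
    then obtain n where "0 < birkhoff_sum T h n x" by (auto simp: not_le)
    ultimately show ?thesis by (intro exI[of _ n]) simp
  qed
  then show "\<exists>n. 0 < birkhoff_sum T (\<lambda>x. indicator D x * h x) n x"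
    if "x \<in> space M" "indicator D x * h x \<noteq> 0" for x
    using that by (auto simp: indicator_eq_0_iff)
qed

text \<open>Applied to \<open>h = g - b\<close>: the nonnegative integral \<open>\<integral>\<^sub>D g - b \<mu>(D) = - b \<mu>(D)\<close> forces
  \<open>D\<close> to be null.\<close>
lemma AE_birkhoff_sum_le_linear:
  fixes g :: "_ \<Rightarrow> real"
  assumes M: "prob_space M" and T: "measure_preserving_map M T" and g: "integrable M g"
    and zero: "\<And>A. A \<in> sets M \<Longrightarrow> T -` A \<inter> space M = A \<Longrightarrow> (\<integral>x. indicator A x * g x \<partial>M) = 0"
    and b: "0 < b"
  shows "AE x in M. \<exists>C. \<forall>n. birkhoff_sum T g n x \<le> C + real n * b"
proof -
  interpret prob_space M by (rule M)
  have Tm: "T \<in> M \<rightarrow>\<^sub>M M" using T unfolding measure_preserving_map_def by blast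
  define h where "h x = g x - b" for x
  have h: "integrable M h" unfolding h_def using g by auto
  define D where "D = {x\<in>space M. \<not> (\<exists>C. \<forall>n. birkhoff_sum T h n x \<le> C)}"
  have D: "D \<in> sets M" using sets_birkhoff_sum_unbounded[OF Tm D_def] h by auto
  have "0 \<le> (\<integral>x. indicator D x * h x \<partial>M)"
    by (rule integral_nonneg_on_birkhoff_sum_unbounded[OF T h D_def])
  also have "(\<integral>x. indicator D x * h x \<partial>M) = (\<integral>x. indicator D x * g x \<partial>M) - b * measure M D"
  proof -
    have gD: "integrable M (\<lambda>x. indicator D x * g x)"
      using integrable_mult_indicator[OF D g] by simp
    have "integrable M (\<lambda>x. b * indicator D x)"
      using D by (intro integrable_mult_right integrable_real_indicator) (auto simp: less_top[symmetric])
    then show ?thesis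
      using gD D by (simp add: h_def right_diff_distrib mult.commute[of _ b])
  qed
  finally have "measure M D = 0"
    using zero[OF D birkhoff_sum_unbounded_invariant[OF Tm D_def]] b measure_nonneg[of M D]
    by (simp add: mult_le_0_iff)
  then have "AE x in M. x \<notin> D"
    using D by (intro AE_not_in) (simp add: emeasure_eq_measure null_sets_def)
  then show ?thesis
  proof (rule AE_mp[OF _ AE_I2], intro impI)
    fix x assume "x \<in> space M" "x \<notin> D"
    then obtain C where "\<And>n. birkhoff_sum T h n x \<le> C" unfolding D_def by blast
    then show "\<exists>C. \<forall>n. birkhoff_sum T g n x \<le> C + real n * b"
      by (intro exI[of _ C]) (simp add: birkhoff_sum_def h_def sum_subtractf algebra_simps)
  qed
qed

lemma tendsto_zero_if_sublinear_bounds: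
  fixes s :: "nat \<Rightarrow> real"
  assumes bound: "\<And>m. 0 < m \<Longrightarrow> \<exists>C. \<forall>n. \<bar>s n\<bar> \<le> C + real n / real m"
  shows "(\<lambda>n. s n / real n) \<longlonglongrightarrow> 0"
proof (rule LIMSEQ_I)
  fix r :: real assume r: "0 < r"
  obtain m :: nat where m: "0 < m" "inverse (real m) < r / 2"
    using ex_inverse_of_nat_less[of "r / 2"] r by auto
  obtain C where C: "\<And>n. \<bar>s n\<bar> \<le> C + real n / real m" using bound[OF m(1)] by blast
  obtain N where N: "\<And>n. N \<le> n \<Longrightarrow> \<bar>C / real n\<bar> < r / 2"
    using LIMSEQ_D[OF lim_const_over_n[of C], of "r / 2"] r by auto
  show "\<exists>N. \<forall>n\<ge>N. norm (s n / real n - 0) < r"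
  proof (intro exI[of _ "max N 1"] allI impI)
    fix n assume n: "max N 1 \<le> n"
    have "\<bar>s n / real n\<bar> \<le> (C + real n / real m) / real n"
      using C[of n] n by (simp add: abs_div divide_right_mono)
    also have "\<dots> = C / real n + inverse (real m)"
      using n by (simp add: field_simps)
    also have "\<dots> < r" using N[of n] n m(2) by linarith
    finally show "norm (s n / real n - 0) < r" by simp
  qed
qed

lemma birkhoff_sum_uminus: "birkhoff_sum T (\<lambda>x. - f x) n x = - birkhoff_sum T f n x"
  by (simp add: birkhoff_sum_def sum_negf)

lemma birkhoff_average_tendsto_zero:
  fixes g :: "_ \<Rightarrow> real"
  assumes M: "prob_space M" and T: "measure_preserving_map M T" and g: "integrable M g"
    and zero: "\<And>A. A \<in> sets M \<Longrightarrow> T -` A \<inter> space M = A \<Longrightarrow> (\<integral>x. indicator A x * g x \<partial>M) = 0"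
  shows "AE x in M. (\<lambda>n. birkhoff_sum T g n x / real n) \<longlonglongrightarrow> 0"
proof -
  have zero': "(\<integral>x. indicator A x * - g x \<partial>M) = 0"
    if "A \<in> sets M" "T -` A \<inter> space M = A" for A
    using zero[OF that] by simp
  have bound: "AE x in M. \<exists>C. \<forall>n. \<bar>birkhoff_sum T g n x\<bar> \<le> C + real n / real m"
    if m: "0 < m" for m :: nat
  proof -
    have b: "0 < 1 / real m" using m by simp
    have "AE x in M. \<exists>C. \<forall>n. birkhoff_sum T g n x \<le> C + real n * (1 / real m)"
      using M T g zero b by (rule AE_birkhoff_sum_le_linear)
    moreover have "AE x in M. \<exists>C. \<forall>n. birkhoff_sum T (\<lambda>x. - g x) n x \<le> C + real n * (1 / real m)"
      using M T integrable_minus[OF g] zero' b by (rule AE_birkhoff_sum_le_linear)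
    ultimately show ?thesis
    proof eventually_elim
      case (elim x)
      obtain C1 where C1: "\<And>n. birkhoff_sum T g n x \<le> C1 + real n * (1 / real m)"
        using elim(1) by (elim exE) blast
      obtain C2 where C2: "\<And>n. birkhoff_sum T (\<lambda>x. - g x) n x \<le> C2 + real n * (1 / real m)"
        using elim(2) by (elim exE) blast
      define C where "C = max C1 C2"
      have "C1 \<le> C" "C2 \<le> C" unfolding C_def by simp_all
      have "\<bar>birkhoff_sum T g n x\<bar> \<le> C + real n / real m" for n
      proof -
        have "real n * (1 / real m) = real n / real m" by simp
        then show ?thesis
          using C1[of n] C2[of n] \<open>C1 \<le> C\<close> \<open>C2 \<le> C\<close>
          unfolding birkhoff_sum_uminus abs_le_iff by linarith
      qed
      then show ?case by blast
    qed
  qed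
  have "AE x in M. \<forall>m::nat. 0 < m \<longrightarrow> (\<exists>C. \<forall>n. \<bar>birkhoff_sum T g n x\<bar> \<le> C + real n / real m)"
    unfolding AE_all_countable by (intro allI AE_impI bound)
  then show ?thesis
    by eventually_elim (rule tendsto_zero_if_sublinear_bounds, blast)
qed

theorem birkhoff_ergodic_theorem:
  fixes f :: "_ \<Rightarrow> real"
  assumes M: "prob_space M" and T: "measure_preserving_map M T" and f: "integrable M f"
  shows "AE x in M. (\<lambda>n. birkhoff_sum T f n x / real n) \<longlonglongrightarrow> real_cond_exp M (invariant_sigma M T) f x"
proof -
  let ?J = "invariant_sigma M T" and ?h = "real_cond_exp M (invariant_sigma M T) f"
  have Tm: "T \<in> M \<rightarrow>\<^sub>M M" using T unfolding measure_preserving_map_def by blast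
  interpret J: sigma_finite_subalgebra M ?J
    using subalgebra_invariant_sigma[OF Tm] M
    by (intro finite_measure_subalgebra_is_sigma_finite)
       (simp add: finite_measure_subalgebra_def finite_measure_subalgebra_axioms_def prob_space_def)
  have h: "integrable M ?h" by (rule J.real_cond_exp_int(1)[OF f])
  have h_inv: "?h ((T ^^ i) x) = ?h x" if "x \<in> space M" for i x
    using invariant_sigma_measurable_funpow[OF Tm borel_measurable_cond_exp that] .
  have zero: "(\<integral>x. indicator A x * (f x - ?h x) \<partial>M) = 0"
    if A: "A \<in> sets M" "T -` A \<inter> space M = A" for A
  proof -
    have "A \<in> sets ?J" using A by (simp add: sets_invariant_sigma[OF Tm])
    then have "(\<integral>x. indicator A x * ?h x \<partial>M) = (\<integral>x. indicator A x * f x \<partial>M)"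
      using J.real_cond_exp_intA[OF f] by (simp add: set_lebesgue_integral_def)
    then show ?thesis
      using integrable_mult_indicator[OF A(1) f] integrable_mult_indicator[OF A(1) h]
      by (simp add: right_diff_distrib)
  qed
  have "AE x in M. (\<lambda>n. birkhoff_sum T (\<lambda>x. f x - ?h x) n x / real n) \<longlonglongrightarrow> 0"
    by (rule birkhoff_average_tendsto_zero[OF M T _ zero]) (use f h in simp)
  then show ?thesis
  proof (rule AE_mp[OF _ AE_I2], intro impI)
    fix x assume x: "x \<in> space M"
      and lim: "(\<lambda>n. birkhoff_sum T (\<lambda>x. f x - ?h x) n x / real n) \<longlonglongrightarrow> 0"
    have "eventually (\<lambda>n. birkhoff_sum T (\<lambda>x. f x - ?h x) n x / real n + ?h x
        = birkhoff_sum T f n x / real n) sequentially"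
      using eventually_gt_at_top[of "0::nat"]
      by eventually_elim (use h_inv[OF x] in \<open>simp add: birkhoff_sum_def sum_subtractf field_simps\<close>)
    moreover have "(\<lambda>n. birkhoff_sum T (\<lambda>x. f x - ?h x) n x / real n + ?h x) \<longlonglongrightarrow> ?h x"
      using tendsto_add[OF lim tendsto_const] by simp
    ultimately show "(\<lambda>n. birkhoff_sum T f n x / real n) \<longlonglongrightarrow> ?h x"
      by (rule Lim_transform_eventually[rotated])
  qed
qed

lemma tendsto_average_shift_iff:
  fixes s s' :: "nat \<Rightarrow> real"
  assumes shift: "\<And>n. s (Suc n) = v + s' n"
  shows "(\<lambda>n. s' n / real n) \<longlonglongrightarrow> L \<longleftrightarrow> (\<lambda>n. s n / real n) \<longlonglongrightarrow> L"
proof -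
  have eq: "s (Suc n) / real (Suc n) = v / real (Suc n) + (real n / real (Suc n)) * (s' n / real n)"
    if "0 < n" for n
    using that by (simp add: shift add_divide_distrib del: of_nat_Suc)
  have eq': "s' n / real n = (real (Suc n) / real n) * (s (Suc n) / real (Suc n)) - v / real n"
    if "0 < n" for n
    using that by (simp add: shift field_simps del: of_nat_Suc)
  show ?thesis
  proof
    assume "(\<lambda>n. s' n / real n) \<longlonglongrightarrow> L"
    then have "(\<lambda>n. v / real (Suc n) + (real n / real (Suc n)) * (s' n / real n)) \<longlonglongrightarrow> 0 + 1 * L"
      by (intro tendsto_add tendsto_mult LIMSEQ_n_over_Suc_n LIMSEQ_Suc[OF lim_const_over_n])
    moreover have "eventually (\<lambda>n. v / real (Suc n) + (real n / real (Suc n)) * (s' n / real n)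
        = s (Suc n) / real (Suc n)) sequentially"
      using eventually_gt_at_top[of 0] by eventually_elim (rule eq[symmetric])
    ultimately have "(\<lambda>n. s (Suc n) / real (Suc n)) \<longlonglongrightarrow> 0 + 1 * L"
      by (rule Lim_transform_eventually)
    then show "(\<lambda>n. s n / real n) \<longlonglongrightarrow> L"
      using LIMSEQ_imp_Suc[where f="\<lambda>n. s n / real n"] by simp
  next
    assume "(\<lambda>n. s n / real n) \<longlonglongrightarrow> L"
    from LIMSEQ_Suc[OF this] have "(\<lambda>n. s (Suc n) / real (Suc n)) \<longlonglongrightarrow> L" .
    then have "(\<lambda>n. (real (Suc n) / real n) * (s (Suc n) / real (Suc n)) - v / real n) \<longlonglongrightarrow> 1 * L - 0"
      by (intro tendsto_diff tendsto_mult LIMSEQ_Suc_n_over_n lim_const_over_n)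
    moreover have "eventually (\<lambda>n. (real (Suc n) / real n) * (s (Suc n) / real (Suc n)) - v / real n
        = s' n / real n) sequentially"
      using eventually_gt_at_top[of 0] by eventually_elim (rule eq'[symmetric])
    ultimately have "(\<lambda>n. s' n / real n) \<longlonglongrightarrow> 1 * L - 0"
      by (rule Lim_transform_eventually)
    then show "(\<lambda>n. s' n / real n) \<longlonglongrightarrow> L" by simp
  qed
qed

text \<open>\<open>lim\<close> is used without a convergence test: where the averages diverge it yields the same
  unspecified value at \<open>x\<close> and at \<open>T x\<close>, which keeps the limit exactly \<open>T\<close>-invariant.\<close>
definition birkhoff_limit :: "('x \<Rightarrow> 'x) \<Rightarrow> ('x \<Rightarrow> real) \<Rightarrow> 'x \<Rightarrow> real" where
  "birkhoff_limit T f x = lim (\<lambda>n. birkhoff_sum T f n x / real n)"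

lemma birkhoff_limit_shift: "birkhoff_limit T f (T x) = birkhoff_limit T f x"
  unfolding birkhoff_limit_def lim_def
  using tendsto_average_shift_iff[of "\<lambda>n. birkhoff_sum T f n x", OF birkhoff_sum_Suc] by simp

lemma borel_measurable_birkhoff_limit:
  assumes "T \<in> M \<rightarrow>\<^sub>M M" "f \<in> borel_measurable M"
  shows "birkhoff_limit T f \<in> borel_measurable (invariant_sigma M T)"
proof (rule measurable_invariant_sigmaI[OF assms(1) _ birkhoff_limit_shift])
  show "birkhoff_limit T f \<in> borel_measurable M"
    unfolding birkhoff_limit_def[abs_def] using assms by measurable
qed

lemma AE_birkhoff_limit:
  fixes f :: "_ \<Rightarrow> real"
  assumes "prob_space M" "measure_preserving_map M T" "integrable M f"
  shows "AE x in M. convergent (\<lambda>n. birkhoff_sum T f n x / real n)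
    \<and> birkhoff_limit T f x = real_cond_exp M (invariant_sigma M T) f x"
  using birkhoff_ergodic_theorem[OF assms]
  by eventually_elim (auto simp: birkhoff_limit_def convergent_def limI)

section \<open>Uniform convergence from equicontinuity\<close>

lemma AE_imp_ex_in_open:
  assumes sets: "sets \<mu> = sets borel"
    and supp: "\<And>U. open U \<Longrightarrow> U \<noteq> {} \<Longrightarrow> emeasure \<mu> U > 0"
    and ae: "AE t in \<mu>. Q t" and U: "open U" "U \<noteq> {}"
  shows "\<exists>t\<in>U. Q t"
proof (rule ccontr)
  assume none: "\<not> (\<exists>t\<in>U. Q t)"
  have "AE t in \<mu>. t \<notin> U" using ae by eventually_elim (use none in auto)
  then have "emeasure \<mu> U = 0"
    using U(1) sets by (subst AE_iff_measurable[symmetric]) (auto simp: sets_eq_imp_space_eq[OF sets])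
  then show False using supp[OF U] by simp
qed

lemma uniformly_Cauchy_on_finite:
  fixes f :: "nat \<Rightarrow> 'a \<Rightarrow> 'b::metric_space"
  assumes "finite C" and "\<And>c. c \<in> C \<Longrightarrow> convergent (\<lambda>n. f n c)"
  shows "uniformly_Cauchy_on C f"
proof (rule uniformly_Cauchy_onI)
  fix e :: real assume e: "0 < e"
  have "\<exists>N. \<forall>m\<ge>N. \<forall>n\<ge>N. dist (f m c) (f n c) < e" if "c \<in> C" for c
    using metric_CauchyD[OF convergent_Cauchy[OF assms(2)[OF that]] e] .
  then obtain N where N: "\<And>c m n. c \<in> C \<Longrightarrow> N c \<le> m \<Longrightarrow> N c \<le> n \<Longrightarrow> dist (f m c) (f n c) < e"
    by metis
  have "N c \<le> Max (N ` C)" if "c \<in> C" for c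
    using assms(1) that by simp
  then show "\<exists>M. \<forall>c\<in>C. \<forall>m\<ge>M. \<forall>n\<ge>M. dist (f m c) (f n c) < e"
    using N by (intro exI[of _ "Max (N ` C)"]) (meson order_trans)
qed

text \<open>Cover the compact space by finitely many \<open>\<delta>\<close>-balls of equicontinuity, pick in each ball a
  point where the sequence converges, and compare every point with the chosen point of its ball.\<close>
lemma uniformly_Cauchy_on_if_equicontinuous:
  fixes a :: "nat \<Rightarrow> 'm::metric_space \<Rightarrow> real"
  assumes compact: "compact (UNIV :: 'm set)"
    and dense: "\<And>U. open U \<Longrightarrow> U \<noteq> {} \<Longrightarrow> \<exists>t\<in>U. convergent (\<lambda>n. a n t)"
    and equi: "\<And>t \<epsilon>. \<epsilon> > 0 \<Longrightarrow> \<exists>\<delta>>0. \<forall>s. dist s t < \<delta> \<longrightarrow> (\<forall>n\<ge>1. \<bar>a n s - a n t\<bar> < \<epsilon>)"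
  shows "uniformly_Cauchy_on UNIV a"
proof (rule uniformly_Cauchy_onI)
  fix \<epsilon> :: real assume "0 < \<epsilon>"
  define e where "e = \<epsilon> / 5"
  have e: "e > 0" using \<open>0 < \<epsilon>\<close> unfolding e_def by simp
  obtain \<delta> where \<delta>: "\<And>t. \<delta> t > 0"
    and close: "\<And>t s n. dist s t < \<delta> t \<Longrightarrow> n \<ge> 1 \<Longrightarrow> \<bar>a n s - a n t\<bar> < e"
    using equi[OF e] by metis
  have cover: "UNIV \<subseteq> (\<Union>c\<in>UNIV. ball c (\<delta> c))" using \<delta> by auto
  obtain C where C: "finite C" "UNIV \<subseteq> (\<Union>c\<in>C. ball c (\<delta> c))"
    by (rule compactE_image[OF compact _ cover]) auto
  have "\<exists>q\<in>ball c (\<delta> c). convergent (\<lambda>n. a n q)" for c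
    using \<delta>[of c] by (intro dense) auto
  then obtain p where p: "\<And>c. p c \<in> ball c (\<delta> c)" "\<And>c. convergent (\<lambda>n. a n (p c))"
    by metis
  have "uniformly_Cauchy_on C (\<lambda>n c. a n (p c))"
    using C(1) p(2) by (rule uniformly_Cauchy_on_finite)
  then obtain N where N: "\<And>c m n. c \<in> C \<Longrightarrow> N \<le> m \<Longrightarrow> N \<le> n \<Longrightarrow> \<bar>a m (p c) - a n (p c)\<bar> < e"
    using e unfolding uniformly_Cauchy_on_def dist_real_def by metis
  show "\<exists>M. \<forall>x\<in>UNIV. \<forall>m\<ge>M. \<forall>n\<ge>M. dist (a m x) (a n x) < \<epsilon>"
  proof (intro exI[of _ "max N 1"] ballI allI impI)
    fix s m n assume m: "max N 1 \<le> m" and n: "max N 1 \<le> n"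
    obtain c where "c \<in> C" "s \<in> ball c (\<delta> c)" using C(2) by blast
    then have c: "c \<in> C" "dist s c < \<delta> c" by (simp_all add: dist_commute)
    have "dist (p c) c < \<delta> c" using p(1)[of c] by (simp add: dist_commute)
    then have "\<bar>a m s - a m c\<bar> < e" "\<bar>a n s - a n c\<bar> < e"
      "\<bar>a m (p c) - a m c\<bar> < e" "\<bar>a n (p c) - a n c\<bar> < e"
      using close c(2) m n by auto
    moreover have "\<bar>a m (p c) - a n (p c)\<bar> < e" using N c(1) m n by auto
    ultimately show "dist (a m s) (a n s) < \<epsilon>"
      unfolding e_def dist_real_def abs_less_iff by linarith
  qed
qed

lemma uniform_limit_imp_SUP_dist_tendsto_zero:
  assumes "uniform_limit S f l sequentially" "S \<noteq> {}"
  shows "(\<lambda>n. SUP t\<in>S. ereal (dist (f n t) (l t))) \<longlonglongrightarrow> 0"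
proof (rule order_tendstoI)
  fix y :: ereal assume "y < 0"
  obtain t where "t \<in> S" using assms(2) by blast
  moreover have "y < ereal (dist (f n t) (l t))" for n
    using \<open>y < 0\<close> zero_le_dist[of "f n t" "l t"] by (metis ereal_less_eq(5) order_less_le_trans)
  ultimately show "eventually (\<lambda>n. y < (SUP t\<in>S. ereal (dist (f n t) (l t)))) sequentially"
    by (auto simp: less_SUP_iff intro: always_eventually)
next
  fix y :: ereal assume "0 < y"
  then obtain e where e: "0 < e" "ereal e < y" using ereal_dense2 by (metis ereal_less(2))
  have "eventually (\<lambda>n. \<forall>t\<in>S. dist (f n t) (l t) < e) sequentially"
    using assms(1) e(1) by (auto simp: uniform_limit_iff)
  then show "eventually (\<lambda>n. (SUP t\<in>S. ereal (dist (f n t) (l t))) < y) sequentially"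
  proof eventually_elim
    case (elim n)
    then have "(SUP t\<in>S. ereal (dist (f n t) (l t))) \<le> ereal e" by (intro SUP_least) auto
    then show ?case using e(2) by simp
  qed
qed

lemma SUP_dist_lim_tendsto_zero_if_equicontinuous:
  fixes a :: "nat \<Rightarrow> 'm::metric_space \<Rightarrow> real"
  assumes "compact (UNIV :: 'm set)"
    and "\<And>U. open U \<Longrightarrow> U \<noteq> {} \<Longrightarrow> \<exists>t\<in>U. convergent (\<lambda>n. a n t)"
    and "\<And>t \<epsilon>. \<epsilon> > 0 \<Longrightarrow> \<exists>\<delta>>0. \<forall>s. dist s t < \<delta> \<longrightarrow> (\<forall>n\<ge>1. \<bar>a n s - a n t\<bar> < \<epsilon>)"
  shows "(\<lambda>n. SUP t. ereal \<bar>a n t - lim (\<lambda>n. a n t)\<bar>) \<longlonglongrightarrow> 0"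
proof -
  obtain l where l: "uniform_limit UNIV a l sequentially"
    using Cauchy_uniformly_convergent[OF uniformly_Cauchy_on_if_equicontinuous[OF assms]]
    unfolding uniformly_convergent_on_def by blast
  have "lim (\<lambda>n. a n t) = l t" for t
    using tendsto_uniform_limitI[OF l] by (simp add: limI)
  then show ?thesis
    using uniform_limit_imp_SUP_dist_tendsto_zero[OF l] by (simp add: dist_real_def)
qed

lemma (in pair_sigma_finite) AE_pair_commute:
  assumes "{x\<in>space (M1 \<Otimes>\<^sub>M M2). Q (fst x) (snd x)} \<in> sets (M1 \<Otimes>\<^sub>M M2)"
    and "AE x in M1 \<Otimes>\<^sub>M M2. Q (fst x) (snd x)"
  shows "AE y in M2. AE x in M1. Q x y"
  using AE_pair[OF assms(2)] AE_commute[OF assms(1)] by simp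

section \<open>Skew products over a measure-preserving \<open>\<int>\<^sup>d\<close>-action\<close>

definition skew_product :: "('m \<Rightarrow> 'm) \<Rightarrow> ('k \<Rightarrow> 'a \<Rightarrow> 'a) \<Rightarrow> ('m \<Rightarrow> 'k) \<Rightarrow> 'm \<times> 'a \<Rightarrow> 'm \<times> 'a" where
  "skew_product \<tau> \<theta> \<kappa> = (\<lambda>(t, \<omega>). (\<tau> t, \<theta> (\<kappa> t) \<omega>))"

locale skew_product_system =
  fixes P :: "'a measure"
    and K :: "(int ^ 'd) set"
    and \<theta> :: "int ^ 'd \<Rightarrow> 'a \<Rightarrow> 'a"
    and \<mu> :: "'m measure"
    and \<tau> :: "'m \<Rightarrow> 'm"
    and \<kappa> :: "'m \<Rightarrow> int ^ 'd"
  assumes prob_P: "prob_space P"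
    and prob_mu: "prob_space \<mu>"
    and zero_in_K: "0 \<in> K"
    and add_in_K: "\<And>k l. k \<in> K \<Longrightarrow> l \<in> K \<Longrightarrow> k + l \<in> K"
    and theta_mp: "\<And>k. k \<in> K \<Longrightarrow> measure_preserving_map P (\<theta> k)"
    and theta_0: "\<theta> 0 = id"
    and theta_comp: "\<And>k l. k \<in> K \<Longrightarrow> l \<in> K \<Longrightarrow> \<theta> k \<circ> \<theta> l = \<theta> (k + l)"
    and tau_mp: "measure_preserving_map \<mu> \<tau>"
    and kappa_meas: "\<kappa> \<in> \<mu> \<rightarrow>\<^sub>M count_space UNIV"
    and kappa_in_K: "\<And>t. \<kappa> t \<in> K"
begin

lemma kappa_sum_in_K: "kappa_sum \<kappa> \<tau> i t \<in> K"
  by (induction i) (simp_all add: kappa_sum_def zero_in_K add_in_K kappa_in_K)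

lemma funpow_skew_product:
  "(skew_product \<tau> \<theta> \<kappa> ^^ i) (t, \<omega>) = ((\<tau> ^^ i) t, \<theta> (kappa_sum \<kappa> \<tau> i t) \<omega>)"
proof (induction i)
  case (Suc i)
  have "\<theta> (\<kappa> ((\<tau> ^^ i) t)) (\<theta> (kappa_sum \<kappa> \<tau> i t) \<omega>) = \<theta> (kappa_sum \<kappa> \<tau> (Suc i) t) \<omega>"
    using theta_comp[OF kappa_in_K kappa_sum_in_K]
    by (simp add: kappa_sum_def add.commute comp_def) metis
  with Suc show ?case by (simp add: skew_product_def)
qed (simp add: kappa_sum_def theta_0)

lemma erg_avg_eq_birkhoff_average:
  "erg_avg F \<tau> \<theta> \<kappa> n t \<omega> = birkhoff_sum (skew_product \<tau> \<theta> \<kappa>) F n (t, \<omega>) / real n"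
  by (simp add: erg_avg_def birkhoff_sum_def funpow_skew_product)

lemma measurable_skew_product: "skew_product \<tau> \<theta> \<kappa> \<in> \<mu> \<Otimes>\<^sub>M P \<rightarrow>\<^sub>M \<mu> \<Otimes>\<^sub>M P"
proof -
  have kappa_K: "\<kappa> \<in> \<mu> \<rightarrow>\<^sub>M count_space K"
    unfolding measurable_count_space_eq2_countable
    using kappa_in_K measurable_sets[OF kappa_meas] by auto
  have "(\<lambda>x. \<theta> (\<kappa> (fst x)) (snd x)) \<in> \<mu> \<Otimes>\<^sub>M P \<rightarrow>\<^sub>M P"
  proof (rule measurable_compose_countable'[where I=K])
    show "(\<lambda>x. \<theta> k (snd x)) \<in> \<mu> \<Otimes>\<^sub>M P \<rightarrow>\<^sub>M P" if "k \<in> K" for k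
      using theta_mp[OF that] by (auto simp: measure_preserving_map_def)
  qed (use kappa_K in \<open>auto intro: countable_subset[OF subset_UNIV countableI_type]\<close>)
  moreover have "(\<lambda>x. \<tau> (fst x)) \<in> \<mu> \<Otimes>\<^sub>M P \<rightarrow>\<^sub>M \<mu>"
    using tau_mp by (auto simp: measure_preserving_map_def)
  ultimately show ?thesis
    unfolding skew_product_def split_beta' by (rule measurable_Pair[rotated])
qed

text \<open>The preimage of a rectangle \<open>A \<times> B\<close> has the section \<open>\<theta> (\<kappa> t) -` B\<close> above each
  \<open>t \<in> \<tau> -` A\<close>; since every \<open>\<theta> k\<close> preserves \<open>P\<close>, these sections all have measure \<open>P B\<close>.\<close>
lemma measure_preserving_skew_product: "measure_preserving_map (\<mu> \<Otimes>\<^sub>M P) (skew_product \<tau> \<theta> \<kappa>)"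
proof -
  let ?S = "skew_product \<tau> \<theta> \<kappa>"
  have S: "?S \<in> \<mu> \<Otimes>\<^sub>M P \<rightarrow>\<^sub>M \<mu> \<Otimes>\<^sub>M P" by (rule measurable_skew_product)
  have tau: "\<tau> \<in> \<mu> \<rightarrow>\<^sub>M \<mu>" "distr \<mu> \<mu> \<tau> = \<mu>"
    using tau_mp by (auto simp: measure_preserving_map_def)
  interpret P: prob_space P by (rule prob_P)
  interpret mu: prob_space \<mu> by (rule prob_mu)
  have "\<mu> \<Otimes>\<^sub>M P = distr (\<mu> \<Otimes>\<^sub>M P) (\<mu> \<Otimes>\<^sub>M P) ?S"
  proof (rule pair_measure_eqI)
    fix A B assume A: "A \<in> sets \<mu>" and B: "B \<in> sets P"
    define X where "X = ?S -` (A \<times> B) \<inter> space (\<mu> \<Otimes>\<^sub>M P)"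
    have X: "X \<in> sets (\<mu> \<Otimes>\<^sub>M P)" unfolding X_def by (rule measurable_sets[OF S pair_measureI[OF A B]])
    have slice: "Pair t -` X = (if \<tau> t \<in> A then \<theta> (\<kappa> t) -` B \<inter> space P else {})"
      if "t \<in> space \<mu>" for t
      using that unfolding X_def skew_product_def by (auto simp: space_pair_measure)
    have theta_B: "emeasure P (\<theta> k -` B \<inter> space P) = emeasure P B" if "k \<in> K" for k
      using theta_mp[OF that] emeasure_distr[of "\<theta> k" P P B] B
      by (auto simp: measure_preserving_map_def)
    have "emeasure (distr (\<mu> \<Otimes>\<^sub>M P) (\<mu> \<Otimes>\<^sub>M P) ?S) (A \<times> B) = emeasure (\<mu> \<Otimes>\<^sub>M P) X"
      unfolding X_def by (rule emeasure_distr[OF S pair_measureI[OF A B]])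
    also have "\<dots> = (\<integral>\<^sup>+t. emeasure P (Pair t -` X) \<partial>\<mu>)"
      by (rule P.emeasure_pair_measure_alt[OF X])
    also have "\<dots> = (\<integral>\<^sup>+t. emeasure P B * indicator (\<tau> -` A \<inter> space \<mu>) t \<partial>\<mu>)"
      by (intro nn_integral_cong) (simp add: slice theta_B kappa_in_K indicator_def)
    also have "\<dots> = emeasure P B * emeasure (distr \<mu> \<mu> \<tau>) A"
      using measurable_sets[OF tau(1) A] by (simp add: nn_integral_cmult emeasure_distr[OF tau(1) A])
    finally show "emeasure \<mu> A * emeasure P B = emeasure (distr (\<mu> \<Otimes>\<^sub>M P) (\<mu> \<Otimes>\<^sub>M P) ?S) (A \<times> B)"
      by (simp add: tau(2) mult.commute)
  qed (simp_all add: mu.sigma_finite_measure_axioms P.sigma_finite_measure_axioms)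
  with S show ?thesis by (simp add: measure_preserving_map_def)
qed

lemma AE_convergent_erg_avg:
  assumes F: "integrable (\<mu> \<Otimes>\<^sub>M P) F"
  shows "AE \<omega> in P. AE t in \<mu>. convergent (\<lambda>n. erg_avg F \<tau> \<theta> \<kappa> n t \<omega>)"
proof -
  let ?S = "skew_product \<tau> \<theta> \<kappa>"
  interpret pair_sigma_finite \<mu> P
    by (intro pair_sigma_finite.intro prob_space_imp_sigma_finite prob_mu prob_P)
  have [measurable]: "birkhoff_sum ?S F n \<in> borel_measurable (\<mu> \<Otimes>\<^sub>M P)" for n
    using measurable_skew_product borel_measurable_integrable[OF F] by measurable
  have "{x\<in>space (\<mu> \<Otimes>\<^sub>M P). convergent (\<lambda>n. birkhoff_sum ?S F n x / real n)} \<in> sets (\<mu> \<Otimes>\<^sub>M P)"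
    unfolding Cauchy_convergent_iff[symmetric] by measurable
  moreover have "AE x in \<mu> \<Otimes>\<^sub>M P. convergent (\<lambda>n. birkhoff_sum ?S F n x / real n)"
    using AE_birkhoff_limit[OF prob_space_pair[OF prob_mu prob_P] measure_preserving_skew_product F]
    by eventually_elim simp
  ultimately show ?thesis
    unfolding erg_avg_eq_birkhoff_average by (intro AE_pair_commute) simp_all
qed

end

theorem theorem4p11:
  fixes P :: "'a measure"
    and K :: "(int ^ 'd) set"
    and \<theta> :: "int ^ 'd \<Rightarrow> 'a \<Rightarrow> 'a"
    and \<mu> :: "'m :: {metric_space, second_countable_topology} measure"
    and \<tau> :: "'m \<Rightarrow> 'm"
    and \<kappa> :: "'m \<Rightarrow> int ^ 'd"
    and F :: "'m \<times> 'a \<Rightarrow> real"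
  assumes P: "prob_space P"
    and K: "K = orthant \<or> K = UNIV"
    and theta_mp: "\<And>k. k \<in> K \<Longrightarrow> measure_preserving_map P (\<theta> k)"
    and theta_0: "\<theta> 0 = id"
    and theta_comp: "\<And>k l. k \<in> K \<Longrightarrow> l \<in> K \<Longrightarrow> \<theta> k \<circ> \<theta> l = \<theta> (k + l)"
    and M_compact: "compact (UNIV :: 'm set)"
    and mu_sets: "sets \<mu> = sets borel"
    and mu_prob: "prob_space \<mu>"
    and tau_cont: "continuous_on UNIV \<tau>"
    and tau_inv: "measure_preserving_map \<mu> \<tau>"
    and mu_supp: "\<And>U. open U \<Longrightarrow> U \<noteq> {} \<Longrightarrow> emeasure \<mu> U > 0"
    and kappa_meas: "\<kappa> \<in> borel \<rightarrow>\<^sub>M count_space UNIV"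
    and kappa_K: "\<And>t. \<kappa> t \<in> K"
    and F_meas: "F \<in> borel_measurable (\<mu> \<Otimes>\<^sub>M P)"
    and F_int: "integrable (\<mu> \<Otimes>\<^sub>M P) F"
    and F_sec: "\<And>t. integrable P (\<lambda>\<omega>. F (t, \<omega>))"
    and equicont: "\<And>\<omega> t \<epsilon>. \<omega> \<in> space P \<Longrightarrow> \<epsilon> > 0 \<Longrightarrow>
        \<exists>\<delta>>0. \<forall>s. dist s t < \<delta> \<longrightarrow>
          (\<forall>n\<ge>1. \<bar>erg_avg F \<tau> \<theta> \<kappa> n s \<omega> - erg_avg F \<tau> \<theta> \<kappa> n t \<omega>\<bar> < \<epsilon>)"
  shows "\<exists>G. G \<in> borel_measurable (invariant_sigma (\<mu> \<Otimes>\<^sub>M P) (\<lambda>(t, \<omega>). (\<tau> t, \<theta> (\<kappa> t) \<omega>)))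
          \<and> (AE x in \<mu> \<Otimes>\<^sub>M P. G x = real_cond_exp (\<mu> \<Otimes>\<^sub>M P)
                (invariant_sigma (\<mu> \<Otimes>\<^sub>M P) (\<lambda>(t, \<omega>). (\<tau> t, \<theta> (\<kappa> t) \<omega>))) F x)
          \<and> (AE \<omega> in P. (\<lambda>n. SUP t. ereal \<bar>erg_avg F \<tau> \<theta> \<kappa> n t \<omega> - G (t, \<omega>)\<bar>)
                \<longlonglongrightarrow> 0)"
proof -
  have kappa_mu: "\<kappa> \<in> \<mu> \<rightarrow>\<^sub>M count_space UNIV"
    using kappa_meas by (simp add: measurable_cong_sets[OF mu_sets refl])
  have K_monoid: "0 \<in> K" "\<And>k l. k \<in> K \<Longrightarrow> l \<in> K \<Longrightarrow> k + l \<in> K"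
    using K unfolding orthant_def by auto
  interpret skew_product_system P K \<theta> \<mu> \<tau> \<kappa>
    by (rule skew_product_system.intro[OF P mu_prob K_monoid theta_mp theta_0 theta_comp tau_inv
          kappa_mu kappa_K])
  let ?S = "skew_product \<tau> \<theta> \<kappa>" and ?J = "invariant_sigma (\<mu> \<Otimes>\<^sub>M P) (skew_product \<tau> \<theta> \<kappa>)"
  have S: "measure_preserving_map (\<mu> \<Otimes>\<^sub>M P) ?S" by (rule measure_preserving_skew_product)
  have AE: "AE x in \<mu> \<Otimes>\<^sub>M P. convergent (\<lambda>n. birkhoff_sum ?S F n x / real n)
      \<and> birkhoff_limit ?S F x = real_cond_exp (\<mu> \<Otimes>\<^sub>M P) ?J F x"
    by (rule AE_birkhoff_limit[OF prob_space_pair[OF mu_prob P] S F_int])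
  have "AE \<omega> in P. AE t in \<mu>. convergent (\<lambda>n. erg_avg F \<tau> \<theta> \<kappa> n t \<omega>)"
    by (rule AE_convergent_erg_avg[OF F_int])
  then have "AE \<omega> in P. (\<lambda>n. SUP t. ereal \<bar>erg_avg F \<tau> \<theta> \<kappa> n t \<omega> - birkhoff_limit ?S F (t, \<omega>)\<bar>) \<longlonglongrightarrow> 0"
  proof (rule AE_mp[OF _ AE_I2], intro impI)
    fix \<omega> assume "\<omega> \<in> space P" and "AE t in \<mu>. convergent (\<lambda>n. erg_avg F \<tau> \<theta> \<kappa> n t \<omega>)"
    then show "(\<lambda>n. SUP t. ereal \<bar>erg_avg F \<tau> \<theta> \<kappa> n t \<omega> - birkhoff_limit ?S F (t, \<omega>)\<bar>) \<longlonglongrightarrow> 0"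
      using SUP_dist_lim_tendsto_zero_if_equicontinuous[OF M_compact
          AE_imp_ex_in_open[OF mu_sets mu_supp] equicont]
      by (simp add: birkhoff_limit_def erg_avg_eq_birkhoff_average)
  qed
  moreover have "birkhoff_limit ?S F \<in> borel_measurable ?J"
    using borel_measurable_birkhoff_limit measurable_skew_product F_meas .
  ultimately show ?thesis
    using AE unfolding skew_product_def[symmetric] by (intro exI[of _ "birkhoff_limit ?S F"]) auto
qed

end
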